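(* Let $n\ge 3$. The characteristic polynomial $\det(xI-A)$ of the adjacency matrix $A$ of the power graph $P(G(n))$ of the gyrogroup $G(n)$ (defined in the context) is $$x^{2^{n-1}-1}(1+x)^{2^{n-1}-2}\left[x^3+(2-2^{n-1})x^2+(1-2^n)x+2^{2n-2}-2^n\right].$$
   Context: Let $n\ge 3$ be an integer and $m=2^{n-1}$. Let $P(n)=\{0,1,\dots,m-1\}$, $H(n)=\{m,m+1,\dots,2^n-1\}$ and $G(n)=P(n)\cup H(n)$. For $i,j\in G(n)$ let $t,s,k\in P(n)$ be the residues modulo $m$ (taken in $\{0,\dots,m-1\}$) of $i+j$, $i+(\frac m2-1)j$ and $(\frac m2+1)i+(\frac m2-1)j$, respectively, and define $i\oplus j=t$ if $i,j\in P(n)$; $i\oplus j=t+m$ if $i\in P(n),j\in H(n)$; $i\oplus j=s+m$ if $i\in H(n),j\in P(n)$; $i\oplus j=k$ if $i,j\in H(n)$. Then $(G(n),\oplus)$ is a gyrogroup with identity $e=0$. Powers are defined by $a^1=a$, $a^{k+1}=a^k\oplus a$. The power graph $P(G(n))$ is the simple undirected graph with vertex set $G(n)$ in which distinct vertices $u,v$ are adjacent if and only if $u^k=v$ or $v^k=u$ for some positive integer $k$. *)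

theory Defs
  imports "Jordan_Normal_Form.Char_Poly"
begin

text \<open>The gyrogroup G(n) on the carrier {0,...,2^n-1}, with m = 2^(n-1).\<close>

definition gyro_op :: "nat \<Rightarrow> nat \<Rightarrow> nat \<Rightarrow> nat" where
  "gyro_op n i j =
     (let m = 2 ^ (n - 1);
          t = (i + j) mod m;
          s = (i + (m div 2 - 1) * j) mod m;
          k = ((m div 2 + 1) * i + (m div 2 - 1) * j) mod m
      in if i < m \<and> j < m then t
         else if i < m \<and> m \<le> j then t + m
         else if m \<le> i \<and> j < m then s + m
         else k)"

text \<open>Powers: a^1 = a, a^(k+1) = a^k \<oplus> a (value at k = 0 is irrelevant).\<close>
fun gyro_pow :: "nat \<Rightarrow> nat \<Rightarrow> nat \<Rightarrow> nat" where
  "gyro_pow n a 0 = 0"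
| "gyro_pow n a (Suc 0) = a"
| "gyro_pow n a (Suc (Suc k)) = gyro_op n (gyro_pow n a (Suc k)) a"

definition power_graph_adj :: "nat \<Rightarrow> nat \<Rightarrow> nat \<Rightarrow> bool" where
  "power_graph_adj n u v \<longleftrightarrow> u \<noteq> v \<and>
     (\<exists>k>0. gyro_pow n u k = v \<or> gyro_pow n v k = u)"

definition power_graph_adj_mat :: "nat \<Rightarrow> int mat" where
  "power_graph_adj_mat n = mat (2 ^ n) (2 ^ n)
     (\<lambda>(u, v). if power_graph_adj n u v then 1 else 0)"

end

(*
  In G(n) the elements of P form the cyclic group of order m = 2^(n-1) and in a cyclic 2-group
  any two elements are powers of one another, so P is a clique.  An element h of H satisfies
  h \<oplus> h = 0 and 0 \<oplus> h = h, so its only powers are h and 0: the vertices of H are pendant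
  vertices attached to 0.  For K_m with m pendant vertices at 0, taking the Schur complement of
  the pendant block x I_m in x I - A leaves x((x+1) I - J) - m E_00, a matrix with constant
  diagonal and constant off-diagonal entries except at (0, 0); expanding along that entry gives
  the characteristic polynomial.
*)
theory Submission
  imports Defs "HOL-Number_Theory.Cong"
begin

lemma det_four_block_mat_scalar_lower_right:
  fixes A :: "'a :: idom mat"
  assumes A: "A \<in> carrier_mat n n" and B: "B \<in> carrier_mat n k" and C: "C \<in> carrier_mat k n"
  shows "det (four_block_mat A B C (d \<cdot>\<^sub>m 1\<^sub>m k)) * d ^ n =
    det (d \<cdot>\<^sub>m A - B * C) * d ^ k"
proof -
  let ?M = "four_block_mat A B C (d \<cdot>\<^sub>m 1\<^sub>m k)"
  let ?E = "four_block_mat (d \<cdot>\<^sub>m 1\<^sub>m n) (0\<^sub>m n k) (- C) (1\<^sub>m k)"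
  have "?M * ?E = four_block_mat (d \<cdot>\<^sub>m A - B * C) B (0\<^sub>m k n) (d \<cdot>\<^sub>m 1\<^sub>m k)"
    using A B C by (subst mult_four_block_mat)
      (auto simp: mult_smult_distrib mult_minus_distrib_mat minus_add_uminus_mat)
  hence "det ?M * det ?E = det (d \<cdot>\<^sub>m A - B * C) * d ^ k"
    using A B C by (subst det_mult[symmetric, of _ "n + k"])
      (auto intro!: det_four_block_mat_lower_left_zero[of _ n _ k, THEN trans])
  moreover have "det ?E = d ^ n"
    using C by (simp add: det_four_block_mat_upper_right_zero[of _ n _ k])
  ultimately show ?thesis by simp
qed

lemma det_affine_in_entry:
  fixes A B :: "'a :: comm_ring_1 mat"
  assumes A: "A \<in> carrier_mat n n" and B: "B \<in> carrier_mat n n" and ij: "i < n" "j < n"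
    and agree: "\<And>k l. k < n \<Longrightarrow> l < n \<Longrightarrow> (k, l) \<noteq> (i, j) \<Longrightarrow> B $$ (k, l) = A $$ (k, l)"
  shows "det B = det A + (B $$ (i, j) - A $$ (i, j)) * cofactor A i j"
proof -
  have "mat_delete B k j = mat_delete A k j" for k
    using A B agree by (auto simp: mat_delete_def)
  hence cof: "cofactor B k j = cofactor A k j" for k
    by (simp add: cofactor_def)
  have "det B = (\<Sum>k<n. B $$ (k, j) * cofactor A k j)"
    using laplace_expansion_column[OF B ij(2)] by (simp add: cof)
  also have "\<dots> = (\<Sum>k<n. A $$ (k, j) * cofactor A k j
                      + (if k = i then (B $$ (i, j) - A $$ (i, j)) * cofactor A i j else 0))"
    using agree ij by (intro sum.cong) (auto simp: algebra_simps)
  also have "\<dots> = det A + (B $$ (i, j) - A $$ (i, j)) * cofactor A i j"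
    using laplace_expansion_column[OF A ij(2)] ij by (simp add: sum.distrib)
  finally show ?thesis .
qed

lemma sum_if_eq_else_const:
  fixes a b :: "'a :: comm_ring_1"
  assumes "i < n"
  shows "(\<Sum>q<n. if q = i then a else b) = a + of_nat (n - 1) * b"
proof -
  have "(\<Sum>q<n. if q = i then a else b) = (\<Sum>q<n. (if q = i then a - b else 0) + b)"
    by (intro sum.cong) auto
  also have "\<dots> = a + of_nat (n - 1) * b"
    using assms by (simp add: sum.distrib of_nat_diff algebra_simps)
  finally show ?thesis .
qed

lemma det_mat_diag_offdiag:
  fixes a b :: "'a :: comm_ring_1"
  assumes n: "n > 0"
  shows "det (mat n n (\<lambda>(i, j). if i = j then a else b)) =
    (a - b) ^ (n - 1) * (a + of_nat (n - 1) * b)"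
proof -
  define s where "s = a + of_nat (n - 1) * b"
  define M where "M = mat n n (\<lambda>(i, j). if i = j then a else b)"
  define R :: "'a mat" where "R = mat n n (\<lambda>(i, j). if i = j \<or> j = 0 then 1 else 0)"
  define L :: "'a mat" where "L = mat n n (\<lambda>(i, j). if i = j then 1 else if j = 0 then -1 else 0)"
  \<comment> \<open>Adding all columns to column 0 and then subtracting row 0 from the other rows
    makes the matrix upper triangular.\<close>
  define U where
    "U = mat n n (\<lambda>(i, j). if i = 0 then (if j = 0 then s else b) else if i = j then a - b else 0)"
  define N where "N = mat n n (\<lambda>(i, j). if j = 0 then s else if i = j then a else b)"
  have "(M * R) $$ (i, j) = N $$ (i, j)" if "i < n" "j < n" for i j
  proof -
    have "(M * R) $$ (i, j) = (\<Sum>q<n. M $$ (i, q) * R $$ (q, j))"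
      using that by (simp add: M_def R_def scalar_prod_def atLeast0LessThan)
    also have "\<dots> = (\<Sum>q<n. if q = j \<or> j = 0 then M $$ (i, q) else 0)"
      using that by (intro sum.cong) (auto simp: R_def)
    also have "\<dots> = N $$ (i, j)"
      using that by (auto simp: M_def N_def s_def sum_if_eq_else_const eq_commute[of i])
    finally show ?thesis .
  qed
  hence MR: "M * R = N"
    by (intro eq_matI) (auto simp: M_def N_def R_def)
  have "(L * N) $$ (i, j) = U $$ (i, j)" if "i < n" "j < n" for i j
  proof -
    have "(L * N) $$ (i, j) = (\<Sum>q<n. L $$ (i, q) * N $$ (q, j))"
      using that by (simp add: L_def N_def scalar_prod_def atLeast0LessThan)
    also have "\<dots> = (\<Sum>q<n. (if q = i then N $$ (q, j) else 0)
                         - (if q = 0 \<and> i \<noteq> 0 then N $$ (q, j) else 0))"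
      using that by (intro sum.cong) (auto simp: L_def)
    also have "\<dots> = U $$ (i, j)"
      using that n by (auto simp: sum_subtractf N_def U_def)
    finally show ?thesis .
  qed
  hence LMR: "L * (M * R) = U"
    by (intro eq_matI) (auto simp: MR L_def U_def N_def)
  have "det L = 1" "det R = 1"
    by (subst det_lower_triangular[of n]; auto simp: L_def R_def prod_list_diag_prod)+
  moreover have "det U = s * (a - b) ^ (n - 1)"
  proof -
    have "det U = (\<Prod>i<n. U $$ (i, i))"
      by (subst det_upper_triangular[of _ n]) (auto simp: U_def prod_list_diag_prod atLeast0LessThan)
    also have "\<dots> = s * (a - b) ^ (n - 1)"
      using n by (cases n) (simp_all only: prod.lessThan_Suc_shift, simp add: U_def)
    finally show ?thesis .
  qed
  moreover have "det (L * (M * R)) = det L * (det M * det R)"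
  proof -
    have c: "L \<in> carrier_mat n n" "M \<in> carrier_mat n n" "R \<in> carrier_mat n n"
      by (simp_all add: L_def M_def R_def)
    show ?thesis
      by (simp add: det_mult[OF c(1) mult_carrier_mat[OF c(2,3)]] det_mult[OF c(2,3)])
  qed
  ultimately have "det M = s * (a - b) ^ (n - 1)"
    using LMR by simp
  thus ?thesis
    by (simp add: M_def s_def mult.commute)
qed

lemma cong_solve_dvd_pos_nat:
  fixes u v N :: nat
  assumes "N > 0" and "gcd u N dvd v"
  shows "\<exists>k>0. [k * u = v] (mod N)"
proof -
  obtain x where "[u * x = v] (mod N)"
    using cong_solve_dvd_nat[OF assms(2)] by blast
  hence "[(x + N) * u = v] (mod N)"
    by (simp add: algebra_simps cong_def)
  thus ?thesis
    using assms(1) by (intro exI[of _ "x + N"]) simp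
qed

lemma prime_power_cong_multiple:
  fixes p u v :: nat
  assumes "prime p"
  shows "\<exists>k>0. [k * u = v] (mod p ^ e) \<or> [k * v = u] (mod p ^ e)"
proof -
  obtain a b where a: "gcd u (p ^ e) = p ^ a" and b: "gcd v (p ^ e) = p ^ b"
    using divides_primepow_nat[OF assms] by (meson gcd_dvd2)
  have pos: "p ^ e > 0"
    using assms by (simp add: prime_gt_0_nat)
  show ?thesis
  proof (cases "a \<le> b")
    case True
    hence "gcd u (p ^ e) dvd v"
      by (metis a b gcd_dvd1 le_imp_power_dvd dvd_trans)
    thus ?thesis using cong_solve_dvd_pos_nat[OF pos] by blast
  next
    case False
    hence "gcd v (p ^ e) dvd u"
      by (metis a b gcd_dvd1 le_imp_power_dvd dvd_trans nat_le_linear)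
    thus ?thesis using cong_solve_dvd_pos_nat[OF pos] by blast
  qed
qed

definition clique_with_pendants_adj :: "nat \<Rightarrow> nat \<Rightarrow> nat \<Rightarrow> bool" where
  "clique_with_pendants_adj m u v \<longleftrightarrow> u \<noteq> v \<and> (u < m \<and> v < m \<or> u = 0 \<or> v = 0)"

definition clique_with_pendants_mat :: "nat \<Rightarrow> int mat" where
  "clique_with_pendants_mat m =
     mat (2 * m) (2 * m) (\<lambda>(u, v). if clique_with_pendants_adj m u v then 1 else 0)"

lemma char_poly_matrix_clique_with_pendants_mat:
  "char_poly_matrix (clique_with_pendants_mat m) =
     four_block_mat (mat m m (\<lambda>(i, j). if i = j then [:0, 1:] else -1))
       (mat m m (\<lambda>(i, j). if i = 0 then -1 else 0))
       (mat m m (\<lambda>(i, j). if j = 0 then -1 else 0)) ([:0, 1:] \<cdot>\<^sub>m 1\<^sub>m m)"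
  by (rule eq_matI)
    (auto simp: char_poly_matrix_def clique_with_pendants_mat_def clique_with_pendants_adj_def)

lemma char_poly_clique_with_pendants_mat:
  assumes m: "m \<ge> 2"
  shows "char_poly (clique_with_pendants_mat m) =
    monom 1 (m - 1) * [:1, 1:] ^ (m - 2) * [: int m ^ 2 - 2 * int m, 1 - 2 * int m, 2 - int m, 1 :]"
proof -
  let ?x = "[:0, 1:] :: int poly"
  define K where "K = mat m m (\<lambda>(i, j). if i = j then ?x else -1)"
  define B :: "int poly mat" where "B = mat m m (\<lambda>(i, j). if i = 0 then -1 else 0)"
  define C :: "int poly mat" where "C = mat m m (\<lambda>(i, j). if j = 0 then -1 else 0)"
  define S where "S = (\<lambda>k. mat k k (\<lambda>(i, j). if i = j then ?x ^ 2 else - ?x))"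
  have "char_poly (clique_with_pendants_mat m) * ?x ^ m = det (?x \<cdot>\<^sub>m K - B * C) * ?x ^ m"
    unfolding char_poly_def char_poly_matrix_clique_with_pendants_mat K_def[symmetric]
      B_def[symmetric] C_def[symmetric]
    by (rule det_four_block_mat_scalar_lower_right) (simp_all add: K_def B_def C_def)
  hence "char_poly (clique_with_pendants_mat m) = det (?x \<cdot>\<^sub>m K - B * C)"
    by simp
  also have "\<dots> = det (S m) - of_nat m * cofactor (S m) 0 0"
  proof -
    have "(B * C) $$ (i, j) = (if i = 0 \<and> j = 0 then of_nat m else 0)" if "i < m" "j < m" for i j
      using that by (simp add: B_def C_def scalar_prod_def)
    hence "?x \<cdot>\<^sub>m K - B * C =
      mat m m (\<lambda>(i, j). if i = 0 \<and> j = 0 then ?x ^ 2 - of_nat m else S m $$ (i, j))"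
      by (intro eq_matI) (auto simp: K_def B_def C_def S_def power2_eq_square)
    thus ?thesis
      using m by (subst det_affine_in_entry[of "S m" m _ 0 0]) (auto simp: S_def)
  qed
  also have "\<dots> = det (S m) - of_nat m * det (S (m - 1))"
  proof -
    have "mat_delete (S m) 0 0 = S (m - 1)"
      by (intro eq_matI) (auto simp: S_def mat_delete_def)
    thus ?thesis by (simp add: cofactor_def)
  qed
  also have "\<dots> = monom 1 (m - 1) * [:1, 1:] ^ (m - 2) *
    [: int m ^ 2 - 2 * int m, 1 - 2 * int m, 2 - int m, 1 :]"
  proof -
    obtain k where k: "m = k + 2" using m by (metis le_add_diff_inverse2)
    have det_S: "det (S (Suc j)) = (?x ^ 2 - - ?x) ^ j * (?x ^ 2 + of_nat j * - ?x)" for j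
      using det_mat_diag_offdiag[of "Suc j" "?x ^ 2" "- ?x"] unfolding S_def by simp
    have factor: "?x ^ 2 - - ?x = ?x * [:1, 1:]"
      by (simp add: power2_eq_square)
    have "det (S m) - of_nat m * det (S (m - 1)) =
      (?x ^ 2 - - ?x) ^ (k + 1) * (?x ^ 2 + of_nat (k + 1) * - ?x)
      - of_nat (k + 2) * ((?x ^ 2 - - ?x) ^ k * (?x ^ 2 + of_nat k * - ?x))"
      using det_S[of "k + 1"] det_S[of k] by (simp add: k)
    also have "\<dots> = ?x ^ (k + 1) * [:1, 1:] ^ k *
      [: int m ^ 2 - 2 * int m, 1 - 2 * int m, 2 - int m, 1 :]"
      unfolding factor power_mult_distrib by (rule poly_ext) (simp add: k algebra_simps power2_eq_square)
    finally show ?thesis by (simp add: k monom_altdef)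
  qed
  finally show ?thesis .
qed

lemma gyro_pow_Suc:
  "k > 0 \<Longrightarrow> gyro_pow n a (Suc k) = gyro_op n (gyro_pow n a k) a"
  by (cases k) simp_all

lemma gyro_op_less:
  "i < 2 ^ (n - 1) \<Longrightarrow> j < 2 ^ (n - 1) \<Longrightarrow> gyro_op n i j = (i + j) mod 2 ^ (n - 1)"
  by (simp add: gyro_op_def)

lemma gyro_op_self_ge:
  assumes "n \<ge> 2" and "2 ^ (n - 1) \<le> u"
  shows "gyro_op n u u = 0"
proof -
  define h :: nat where "h = 2 ^ (n - 2)"
  have m: "2 ^ (n - 1) = 2 * h" and h: "h > 0"
    using assms(1) by (simp_all add: h_def power_Suc[symmetric] Suc_diff_Suc numeral_2_eq_2)
  have "gyro_op n u u = ((h + 1) * u + (h - 1) * u) mod (2 * h)"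
    using assms(2) unfolding gyro_op_def Let_def m by simp
  also have "(h + 1) * u + (h - 1) * u = 2 * h * u"
    using h by (cases h) (simp_all add: algebra_simps)
  finally show ?thesis by simp
qed

lemma gyro_op_zero_ge:
  assumes "2 ^ (n - 1) \<le> u" and "u < 2 * 2 ^ (n - 1)"
  shows "gyro_op n 0 u = u"
  using assms by (simp add: gyro_op_def le_mod_geq)

lemma gyro_pow_less:
  assumes "u < 2 ^ (n - 1)" and "k > 0"
  shows "gyro_pow n u k = k * u mod 2 ^ (n - 1)"
  using assms(2)
proof (induction k rule: nat_induct_non_zero)
  case 1
  thus ?case using assms(1) by simp
next
  case (Suc k)
  thus ?case
    using assms(1) by (simp add: gyro_pow_Suc gyro_op_less) (metis mod_add_left_eq add.commute)
qed

lemma gyro_pow_ge: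
  assumes "n \<ge> 2" and "2 ^ (n - 1) \<le> u" and "u < 2 * 2 ^ (n - 1)" and "k > 0"
  shows "gyro_pow n u k = (if odd k then u else 0)"
  using assms(4)
proof (induction k rule: nat_induct_non_zero)
  case 1
  thus ?case by simp
next
  case (Suc k)
  thus ?case
    using assms by (simp add: gyro_pow_Suc gyro_op_self_ge gyro_op_zero_ge)
qed

lemma gyro_pow_two_pow_eq_zero:
  assumes "n \<ge> 2" and "v < 2 ^ n"
  shows "gyro_pow n v (2 ^ n) = 0"
proof -
  have two_m: "(2::nat) ^ n = 2 * 2 ^ (n - 1)"
    using assms(1) by (simp add: power_Suc[symmetric])
  show ?thesis
  proof (cases "v < 2 ^ (n - 1)")
    case True
    thus ?thesis by (simp add: gyro_pow_less two_m)
  next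
    case False
    thus ?thesis using assms by (simp add: gyro_pow_ge two_m)
  qed
qed

lemma power_graph_adj_iff:
  assumes n: "n \<ge> 2" and u: "u < 2 ^ n" and v: "v < 2 ^ n"
  shows "power_graph_adj n u v \<longleftrightarrow> clique_with_pendants_adj (2 ^ (n - 1)) u v"
proof -
  define m :: nat where "m = 2 ^ (n - 1)"
  have two_m: "(2::nat) ^ n = 2 * m"
    using n by (simp add: m_def power_Suc[symmetric])
  have power_cases: "(a < m \<and> b < m) \<or> b = 0"
    if "a < 2 ^ n" "k > 0" "gyro_pow n a k = b" "b \<noteq> a" for a b k
    using that n by (cases "a < m") (auto simp: gyro_pow_less gyro_pow_ge m_def two_m split: if_splits)
  show ?thesis
  proof
    assume "power_graph_adj n u v"
    then obtain k where k: "k > 0" and "u \<noteq> v" and "gyro_pow n u k = v \<or> gyro_pow n v k = u"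
      by (auto simp: power_graph_adj_def)
    hence "(u < m \<and> v < m) \<or> u = 0 \<or> v = 0"
      using power_cases[OF u k, of v] power_cases[OF v k, of u] by auto
    thus "clique_with_pendants_adj (2 ^ (n - 1)) u v"
      using \<open>u \<noteq> v\<close> by (simp add: clique_with_pendants_adj_def m_def)
  next
    assume adj: "clique_with_pendants_adj (2 ^ (n - 1)) u v"
    hence "u \<noteq> v" by (simp add: clique_with_pendants_adj_def)
    consider "u < m" "v < m" | "u = 0" | "v = 0"
      using adj by (auto simp: clique_with_pendants_adj_def m_def)
    thus "power_graph_adj n u v"
    proof cases
      case 1
      then obtain k where "k > 0" "[k * u = v] (mod m) \<or> [k * v = u] (mod m)"
        using prime_power_cong_multiple[of 2 u v "n - 1"] by (auto simp: m_def)
      thus ?thesis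
        using 1 \<open>u \<noteq> v\<close> by (auto simp: power_graph_adj_def gyro_pow_less cong_def m_def)
    next
      case 2
      thus ?thesis
        using \<open>u \<noteq> v\<close> gyro_pow_two_pow_eq_zero[OF n v] unfolding power_graph_adj_def
        by (intro conjI exI[of _ "2 ^ n"]) simp_all
    next
      case 3
      thus ?thesis
        using \<open>u \<noteq> v\<close> gyro_pow_two_pow_eq_zero[OF n u] unfolding power_graph_adj_def
        by (intro conjI exI[of _ "2 ^ n"]) simp_all
    qed
  qed
qed

lemma power_graph_adj_mat_eq_clique_with_pendants_mat:
  assumes "n \<ge> 2"
  shows "power_graph_adj_mat n = clique_with_pendants_mat (2 ^ (n - 1))"
proof -
  have "(2::nat) ^ n = 2 * 2 ^ (n - 1)"
    using assms by (simp add: power_Suc[symmetric])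
  thus ?thesis
    using power_graph_adj_iff[OF assms]
    by (auto simp: power_graph_adj_mat_def clique_with_pendants_mat_def)
qed

theorem mainTheorem8:
  fixes n :: nat
  assumes "n \<ge> 3"
  shows "char_poly (power_graph_adj_mat n) =
    monom 1 (2 ^ (n - 1) - 1) * [:1, 1:] ^ (2 ^ (n - 1) - 2) *
    [: 2 ^ (2 * n - 2) - 2 ^ n, 1 - 2 ^ n, 2 - 2 ^ (n - 1), 1 :]"
proof -
  have m: "(2::nat) ^ (n - 1) \<ge> 2"
    using power_increasing[of 1 "n - 1" "2::nat"] assms by simp
  have pow_n: "(2::int) ^ n = 2 * 2 ^ (n - 1)"
    using assms by (simp add: power_Suc[symmetric])
  have "2 * n - 2 = (n - 1) * 2"
    by simp
  hence pow_2n: "(2::int) ^ (2 * n - 2) = (2 ^ (n - 1)) ^ 2"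
    by (simp add: power_mult)
  have "char_poly (power_graph_adj_mat n) = char_poly (clique_with_pendants_mat (2 ^ (n - 1)))"
    using assms by (simp add: power_graph_adj_mat_eq_clique_with_pendants_mat)
  also have "\<dots> = monom 1 (2 ^ (n - 1) - 1) * [:1, 1:] ^ (2 ^ (n - 1) - 2) *
    [: (2 ^ (n - 1)) ^ 2 - 2 * 2 ^ (n - 1), 1 - 2 * 2 ^ (n - 1), 2 - 2 ^ (n - 1), 1 :]"
    using char_poly_clique_with_pendants_mat[OF m] by simp
  finally show ?thesis
    unfolding pow_n pow_2n .
qed

end
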